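(* Let $m\ge n$, $0\le r<n$, $A^1,\dots,A^l\in\mathbb{R}^{m\times n}$, $b\in\mathbb{R}^l$, and let $X\in\mathcal{L}\cap\mathcal{M}(r)$ with $\operatorname{rank}(X)=s$ and SVD $X=U\Sigma V^\top$ as in the context. Then: (i) if Assumption 1 holds at $X$, then $\mathrm{N}^M_{\mathcal{M}(r)}(X)\cap\mathrm{N}_{\mathcal{L}}(X)=\{O\}$; (ii) if Assumption 2 holds at $X$, then for every index set $J\subseteq\{1,\dots,n\}$ with $\Gamma\subseteq J$, $\mathrm{N}_{\mathcal{M}_X(J)}(X)\cap\mathrm{N}_{\mathcal{L}}(X)=\{O\}$, where $\mathcal{M}_X(J)=\{UBV_J^\top:B\in\mathbb{R}^{m\times |J|}\}$ and $\mathrm{N}_{\mathcal{M}_X(J)}(X)=\{W: U^\top WV_J=O\}$ is its orthogonal complement.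
   Context: $\langle X,Y\rangle=\sum_{i,j}X_{ij}Y_{ij}$ on $\mathbb{R}^{m\times n}$; $O$ is the zero matrix. $\mathcal{A}(X)=(\langle A^1,X\rangle,\dots,\langle A^l,X\rangle)^\top$, $\mathcal{L}=\{X:\mathcal{A}(X)=b\}$, $\mathcal{M}(r)=\{X:\operatorname{rank}(X)\le r\}$, $\mathrm{N}_{\mathcal{L}}(X)=\{\sum_{i=1}^l y_iA^i: y\in\mathbb{R}^l\}$. SVD convention: $X=U\Sigma V^\top$ with $U$ ($m\times m$) and $V$ ($n\times n$) orthogonal, $\Sigma$ with diagonal $\sigma_1\ge\dots\ge\sigma_s>0$ followed by zeros, $\Gamma=\{1,\dots,s\}$, $\Gamma_m^\perp=\{s+1,\dots,m\}$, $\Gamma_n^\perp=\{s+1,\dots,n\}$; $U_J$, $V_J$ denote column submatrices indexed by $J$. Normal space of the fixed-rank manifold $\mathcal{M}^s=\{X:\operatorname{rank}X=s\}$: $\mathrm{N}_{\mathcal{M}^s}(X)=\{U_{\Gamma_m^\perp}DV_{\Gamma_n^\perp}^\top:D\in\mathbb{R}^{(m-s)\times(n-s)}\}$. Cones: for closed $\Omega$, $X\in\Omega$, $\mathrm{T}^B_\Omega(X)$ is the set of $\Xi$ with $X^k\in\Omega$, $X^k\to X$, $t_k\downarrow0$, $(X^k-X)/t_k\to\Xi$; $\mathrm{N}^F_\Omega(X)$ is its polar $\{Y:\langle Y,\Xi\rangle\le0\ \forall\Xi\in \mathrm{T}^B_\Omega(X)\}$; the Mordukhovich normal cone $\mathrm{N}^M_\Omega(X)$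 is the set of limits of sequences $W^k\in\mathrm{N}^F_\Omega(X^k)$ with $X^k\in\Omega$, $X^k\to X$. Define $T^i_X=\begin{bmatrix}U_\Gamma^\top A^iV_\Gamma & U_\Gamma^\top A^iV_{\Gamma_n^\perp}\\ U_{\Gamma_m^\perp}^\top A^iV_\Gamma & O\end{bmatrix}$ and $R^i_X=U^\top A^iV_\Gamma$, $i=1,\dots,l$. Assumption 1 at $X$: $T^1_X,\dots,T^l_X$ are linearly independent. Assumption 2 at $X$: $R^1_X,\dots,R^l_X$ are linearly independent. *)

theory Defs
  imports "HOL-Analysis.Analysis" "Jordan_Normal_Form.DL_Rank" "Jordan_Normal_Form.DL_Submatrix"
begin

text \<open>Matrices are Jordan_Normal_Form matrices (real mat); indices are 0-based,
so the paper's index i corresponds to i-1 here.\<close>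

definition frob :: "real mat \<Rightarrow> real mat \<Rightarrow> real" where
  "frob X Y = (\<Sum>i<dim_row X. \<Sum>j<dim_col X. X $$ (i,j) * Y $$ (i,j))"

definition mat_tendsto :: "nat \<Rightarrow> nat \<Rightarrow> (nat \<Rightarrow> real mat) \<Rightarrow> real mat \<Rightarrow> bool" where
  "mat_tendsto m n Xs X \<longleftrightarrow> (\<forall>k. Xs k \<in> carrier_mat m n) \<and> X \<in> carrier_mat m n \<and>
     (\<forall>i<m. \<forall>j<n. (\<lambda>k. Xs k $$ (i,j)) \<longlonglongrightarrow> X $$ (i,j))"

definition bouligand_tangent :: "nat \<Rightarrow> nat \<Rightarrow> real mat set \<Rightarrow> real mat \<Rightarrow> real mat set" where
  "bouligand_tangent m n \<Omega> X = {\<Xi> \<in> carrier_mat m n. \<exists>Xs t.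
      (\<forall>k. Xs k \<in> \<Omega>) \<and> mat_tendsto m n Xs X \<and> (\<forall>k. t k > 0) \<and> t \<longlonglongrightarrow> 0 \<and>
      mat_tendsto m n (\<lambda>k. (1 / t k) \<cdot>\<^sub>m (Xs k - X)) \<Xi>}"

definition frechet_normal :: "nat \<Rightarrow> nat \<Rightarrow> real mat set \<Rightarrow> real mat \<Rightarrow> real mat set" where
  "frechet_normal m n \<Omega> X = {Y \<in> carrier_mat m n. \<forall>\<Xi> \<in> bouligand_tangent m n \<Omega> X. frob Y \<Xi> \<le> 0}"

definition mordukhovich_normal :: "nat \<Rightarrow> nat \<Rightarrow> real mat set \<Rightarrow> real mat \<Rightarrow> real mat set" where
  "mordukhovich_normal m n \<Omega> X = {W \<in> carrier_mat m n. \<exists>Xs Ws.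
      (\<forall>k. Xs k \<in> \<Omega>) \<and> mat_tendsto m n Xs X \<and>
      (\<forall>k. Ws k \<in> frechet_normal m n \<Omega> (Xs k)) \<and> mat_tendsto m n Ws W}"

definition mrank :: "real mat \<Rightarrow> nat" where
  "mrank X = vec_space.rank (dim_row X) X"

definition low_rank_set :: "nat \<Rightarrow> nat \<Rightarrow> nat \<Rightarrow> real mat set" where
  "low_rank_set m n r = {X \<in> carrier_mat m n. mrank X \<le> r}"

text \<open>Affine set L = {X : A(X) = b}, with A^1..A^l given as A 0 .. A (l-1).\<close>
definition affine_set :: "nat \<Rightarrow> nat \<Rightarrow> nat \<Rightarrow> (nat \<Rightarrow> real mat) \<Rightarrow> (nat \<Rightarrow> real) \<Rightarrow> real mat set" where
  "affine_set m n l A b = {X \<in> carrier_mat m n. \<forall>i<l. frob (A i) X = b i}"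

definition normal_L :: "nat \<Rightarrow> nat \<Rightarrow> nat \<Rightarrow> (nat \<Rightarrow> real mat) \<Rightarrow> real mat set" where
  "normal_L m n l A = {W \<in> carrier_mat m n. \<exists>y :: nat \<Rightarrow> real.
      \<forall>p<m. \<forall>q<n. W $$ (p,q) = (\<Sum>i<l. y i * A i $$ (p,q))}"

definition mats_lin_indep :: "nat \<Rightarrow> nat \<Rightarrow> nat \<Rightarrow> (nat \<Rightarrow> real mat) \<Rightarrow> bool" where
  "mats_lin_indep p q l T \<longleftrightarrow> (\<forall>c :: nat \<Rightarrow> real.
      (\<forall>a<p. \<forall>b<q. (\<Sum>i<l. c i * T i $$ (a,b)) = 0) \<longrightarrow> (\<forall>i<l. c i = 0))"

definition cols_sub :: "real mat \<Rightarrow> nat set \<Rightarrow> real mat" where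
  "cols_sub M J = submatrix M {0..<dim_row M} J"

text \<open>T^i_X as a 2x2 block matrix, with Gamma = {0..<s}.\<close>
definition T_mat :: "nat \<Rightarrow> nat \<Rightarrow> nat \<Rightarrow> real mat \<Rightarrow> real mat \<Rightarrow> real mat \<Rightarrow> real mat" where
  "T_mat m n s U V Ai = four_block_mat
     (transpose_mat (cols_sub U {0..<s}) * Ai * cols_sub V {0..<s})
     (transpose_mat (cols_sub U {0..<s}) * Ai * cols_sub V {s..<n})
     (transpose_mat (cols_sub U {s..<m}) * Ai * cols_sub V {0..<s})
     (0\<^sub>m (m - s) (n - s))"

definition R_mat :: "nat \<Rightarrow> real mat \<Rightarrow> real mat \<Rightarrow> real mat \<Rightarrow> real mat" where
  "R_mat s U V Ai = transpose_mat U * Ai * cols_sub V {0..<s}"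

definition is_svd :: "nat \<Rightarrow> nat \<Rightarrow> nat \<Rightarrow> real mat \<Rightarrow> real mat \<Rightarrow> real mat \<Rightarrow> real mat \<Rightarrow> bool" where
  "is_svd m n s X U S V \<longleftrightarrow>
     U \<in> carrier_mat m m \<and> transpose_mat U * U = 1\<^sub>m m \<and> U * transpose_mat U = 1\<^sub>m m \<and>
     V \<in> carrier_mat n n \<and> transpose_mat V * V = 1\<^sub>m n \<and> V * transpose_mat V = 1\<^sub>m n \<and>
     S \<in> carrier_mat m n \<and> (\<forall>i<m. \<forall>j<n. i \<noteq> j \<longrightarrow> S $$ (i,j) = 0) \<and>
     (\<forall>i<s. S $$ (i,i) > 0) \<and> (\<forall>i. i + 1 < s \<longrightarrow> S $$ (i,i) \<ge> S $$ (i+1,i+1)) \<and>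
     (\<forall>i. s \<le> i \<and> i < min m n \<longrightarrow> S $$ (i,i) = 0) \<and>
     X = U * S * transpose_mat V"

definition normal_MXJ :: "nat \<Rightarrow> nat \<Rightarrow> real mat \<Rightarrow> real mat \<Rightarrow> nat set \<Rightarrow> real mat set" where
  "normal_MXJ m n U V J = {W \<in> carrier_mat m n.
      transpose_mat U * W * cols_sub V J = 0\<^sub>m m (card J)}"

end

theory Submission
  imports Defs
begin

(* A Mordukhovich normal W to M(r) at X is a limit of Frechet normals Y at points Z of M(r)
   near X.  Since Z (I + t E) and (I + t E) Z stay in M(r), both Z E and E Z are tangent at Z;
   testing Y against Z (Z^T Y) and (Y Z^T) Z gives |Z^T Y|^2 <= 0 and |Y Z^T|^2 <= 0, and in
   the limit X^T W = 0 and W X^T = 0.  Through the SVD this means U_Gamma^T W = 0 and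
   W V_Gamma = 0, so the three nonzero blocks of T_X(W) vanish.  If moreover W = sum_i y_i A^i,
   then T_X(W) = sum_i y_i T^i_X by linearity, and Assumption 1 forces y = 0.  Part (ii) is the
   same argument with R_X: because Gamma is contained in J, U^T W V_J = 0 contains
   U^T W V_Gamma = 0. *)

definition lincomb_mat :: "nat \<Rightarrow> nat \<Rightarrow> nat \<Rightarrow> (nat \<Rightarrow> real) \<Rightarrow> (nat \<Rightarrow> real mat) \<Rightarrow> real mat" where
  "lincomb_mat m n l y A = mat m n (\<lambda>(p,q). \<Sum>i<l. y i * A i $$ (p,q))"

lemma lincomb_mat_carrier [simp]: "lincomb_mat m n l y A \<in> carrier_mat m n"
  unfolding lincomb_mat_def by simp

lemma lincomb_mat_zero_coeffs [simp]: "lincomb_mat m n l (\<lambda>_. 0) A = 0\<^sub>m m n"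
  unfolding lincomb_mat_def by auto

lemma lincomb_mat_zero_mats [simp]: "lincomb_mat m n l y (\<lambda>_. 0\<^sub>m m n) = 0\<^sub>m m n"
  unfolding lincomb_mat_def by auto

lemma normal_L_iff_lincomb_mat: "W \<in> normal_L m n l A \<longleftrightarrow> (\<exists>y. W = lincomb_mat m n l y A)"
proof
  assume "W \<in> normal_L m n l A"
  then obtain y where "W \<in> carrier_mat m n" "\<forall>p<m. \<forall>q<n. W $$ (p,q) = (\<Sum>i<l. y i * A i $$ (p,q))"
    unfolding normal_L_def by blast
  then have "W = lincomb_mat m n l y A" unfolding lincomb_mat_def by auto
  then show "\<exists>y. W = lincomb_mat m n l y A" by blast
qed (auto simp: normal_L_def lincomb_mat_def)

lemma mats_lin_indep_iff_lincomb_mat: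
  "mats_lin_indep p q l T \<longleftrightarrow> (\<forall>c. lincomb_mat p q l c T = 0\<^sub>m p q \<longrightarrow> (\<forall>i<l. c i = 0))"
proof -
  have "lincomb_mat p q l c T = 0\<^sub>m p q \<longleftrightarrow> (\<forall>a<p. \<forall>b<q. (\<Sum>i<l. c i * T i $$ (a,b)) = 0)" for c
    unfolding lincomb_mat_def mat_eq_iff by auto
  then show ?thesis unfolding mats_lin_indep_def by simp
qed

lemma mult_lincomb_mat:
  assumes P: "P \<in> carrier_mat k m" and Q: "Q \<in> carrier_mat n k'"
    and A: "\<forall>i<l. A i \<in> carrier_mat m n"
  shows "P * lincomb_mat m n l y A * Q = lincomb_mat k k' l y (\<lambda>i. P * A i * Q)"
proof (rule eq_matI)
  fix a b assume "a < dim_row (lincomb_mat k k' l y (\<lambda>i. P * A i * Q))"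
    "b < dim_col (lincomb_mat k k' l y (\<lambda>i. P * A i * Q))"
  then have a: "a < k" and b: "b < k'" by (simp_all add: lincomb_mat_def)
  have entry: "(P * M * Q) $$ (a,b) = (\<Sum>p<m. \<Sum>q<n. P $$ (a,p) * M $$ (p,q) * Q $$ (q,b))"
    if "M \<in> carrier_mat m n" for M
    using that P Q a b
    by (simp add: scalar_prod_def atLeast0LessThan sum_distrib_left sum_distrib_right mult_ac)
  have "(P * lincomb_mat m n l y A * Q) $$ (a,b)
      = (\<Sum>p<m. \<Sum>q<n. \<Sum>i<l. y i * (P $$ (a,p) * A i $$ (p,q) * Q $$ (q,b)))"
    unfolding entry[OF lincomb_mat_carrier]
    by (simp add: lincomb_mat_def sum_distrib_left sum_distrib_right mult_ac)
  also have "\<dots> = (\<Sum>i<l. y i * (P * A i * Q) $$ (a,b))"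
    using A by (simp add: entry sum_distrib_left sum.swap[of _ "{..<l}"])
  also have "\<dots> = lincomb_mat k k' l y (\<lambda>i. P * A i * Q) $$ (a,b)"
    using a b by (simp add: lincomb_mat_def)
  finally show "(P * lincomb_mat m n l y A * Q) $$ (a,b) = lincomb_mat k k' l y (\<lambda>i. P * A i * Q) $$ (a,b)" .
qed (use P Q in \<open>simp_all add: lincomb_mat_def\<close>)

lemma eq_zero_if_lin_indep_image:
  assumes W: "W \<in> normal_L m n l A"
    and lin: "\<And>y. \<phi> (lincomb_mat m n l y A) = lincomb_mat p q l y (\<lambda>i. \<phi> (A i))"
    and indep: "mats_lin_indep p q l (\<lambda>i. \<phi> (A i))"
    and vanish: "\<phi> W = 0\<^sub>m p q"
  shows "W = 0\<^sub>m m n"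
proof -
  obtain y where y: "W = lincomb_mat m n l y A" using W normal_L_iff_lincomb_mat by blast
  have "lincomb_mat p q l y (\<lambda>i. \<phi> (A i)) = 0\<^sub>m p q" using vanish by (simp add: y lin)
  with indep have "\<forall>i<l. y i = 0" unfolding mats_lin_indep_iff_lincomb_mat by blast
  then have "lincomb_mat m n l y A = lincomb_mat m n l (\<lambda>_. 0) A"
    unfolding lincomb_mat_def by (intro eq_matI) auto
  then show ?thesis by (simp add: y)
qed

lemma lincomb_four_block_mat:
  assumes "\<forall>i<l. B1 i \<in> carrier_mat p1 q1 \<and> B2 i \<in> carrier_mat p1 q2 \<and>
      B3 i \<in> carrier_mat p2 q1 \<and> B4 i \<in> carrier_mat p2 q2"
  shows "lincomb_mat (p1 + p2) (q1 + q2) l y (\<lambda>i. four_block_mat (B1 i) (B2 i) (B3 i) (B4 i))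
    = four_block_mat (lincomb_mat p1 q1 l y B1) (lincomb_mat p1 q2 l y B2)
        (lincomb_mat p2 q1 l y B3) (lincomb_mat p2 q2 l y B4)"
  using assms by (intro eq_matI) (auto simp: lincomb_mat_def intro!: sum.cong)

lemma pick_atLeastLessThan:
  assumes "j < hi - lo" shows "pick {lo..<hi} j = lo + j"
proof -
  have "{a \<in> {lo..<hi}. a < lo + j} = {lo..<lo + j}" using assms by auto
  then show ?thesis using pick_card_in_set[of "lo + j" "{lo..<hi}"] assms by auto
qed

lemma pick_prefix:
  assumes "{0..<s} \<subseteq> J" and "k < s" shows "pick J k = k"
proof -
  have "{a \<in> J. a < k} = {0..<k}" using assms by auto
  then show ?thesis using pick_card_in_set[of k J] assms by auto
qed

lemma cols_sub_carrier:
  assumes "M \<in> carrier_mat p q" and "J \<subseteq> {0..<q}"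
  shows "cols_sub M J \<in> carrier_mat p (card J)"
proof (rule carrier_matI)
  have "{i. i < dim_row M \<and> i \<in> {0..<dim_row M}} = {0..<p}" "{j. j < dim_col M \<and> j \<in> J} = J"
    using assms by auto
  then show "dim_row (cols_sub M J) = p" "dim_col (cols_sub M J) = card J"
    unfolding cols_sub_def dim_submatrix by simp_all
qed

lemma cols_sub_index:
  assumes M: "M \<in> carrier_mat p q" and J: "J \<subseteq> {0..<q}" and i: "i < p" and j: "j < card J"
  shows "cols_sub M J $$ (i,j) = M $$ (i, pick J j)"
proof -
  have "{i. i < dim_row M \<and> i \<in> {0..<dim_row M}} = {0..<p}" "{j. j < dim_col M \<and> j \<in> J} = J"
    using M J by auto
  then have "i < card {i. i < dim_row M \<and> i \<in> {0..<dim_row M}}" "j < card {j. j < dim_col M \<and> j \<in> J}"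
    using i j by simp_all
  then have "cols_sub M J $$ (i,j) = M $$ (pick {0..<dim_row M} i, pick J j)"
    unfolding cols_sub_def by (rule submatrix_index)
  then show ?thesis
    using pick_atLeastLessThan[of i p 0] M i by simp
qed

lemma col_cols_sub_prefix:
  assumes M: "M \<in> carrier_mat p q" and J: "J \<subseteq> {0..<q}" "{0..<s} \<subseteq> J" and j: "j < s"
  shows "col (cols_sub M J) j = col M j"
proof -
  have jJ: "j < card J" using J j card_mono[of J "{0..<s}"] finite_subset[of J "{0..<q}"] by auto
  have jq: "j < q" using J j by (metis atLeastLessThan_iff le0 subsetD)
  show ?thesis
  proof (rule eq_vecI)
    show "dim_vec (col (cols_sub M J) j) = dim_vec (col M j)"
      using cols_sub_carrier[OF M J(1)] M by simp
    fix i assume "i < dim_vec (col M j)"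
    then have "i < p" using M by simp
    then show "col (cols_sub M J) j $ i = col M j $ i"
      using cols_sub_carrier[OF M J(1)] cols_sub_index[OF M J(1) _ jJ] pick_prefix[OF J(2) j] M jJ jq
      by simp
  qed
qed

lemma cols_sub_atLeastLessThan_carrier:
  assumes "M \<in> carrier_mat p q" and "lo \<le> hi" and "hi \<le> q"
  shows "cols_sub M {lo..<hi} \<in> carrier_mat p (hi - lo)"
  using cols_sub_carrier[OF assms(1), of "{lo..<hi}"] assms(3) by auto

lemma T_mat_lincomb:
  assumes U: "U \<in> carrier_mat m m" and V: "V \<in> carrier_mat n n"
    and sm: "s \<le> m" and sn: "s \<le> n" and A: "\<forall>i<l. A i \<in> carrier_mat m n"
  shows "T_mat m n s U V (lincomb_mat m n l y A) = lincomb_mat m n l y (\<lambda>i. T_mat m n s U V (A i))"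
proof -
  let ?U1 = "cols_sub U {0..<s}" and ?U2 = "cols_sub U {s..<m}"
  let ?V1 = "cols_sub V {0..<s}" and ?V2 = "cols_sub V {s..<n}"
  have U1: "transpose_mat ?U1 \<in> carrier_mat s m" and U2: "transpose_mat ?U2 \<in> carrier_mat (m - s) m"
    and V1: "?V1 \<in> carrier_mat n s" and V2: "?V2 \<in> carrier_mat n (n - s)"
    using cols_sub_atLeastLessThan_carrier[OF U, of 0 s] cols_sub_atLeastLessThan_carrier[OF U, of s m]
      cols_sub_atLeastLessThan_carrier[OF V, of 0 s] cols_sub_atLeastLessThan_carrier[OF V, of s n] sm sn
    by auto
  have "lincomb_mat m n l y (\<lambda>i. T_mat m n s U V (A i))
      = lincomb_mat (s + (m - s)) (s + (n - s)) l y (\<lambda>i. T_mat m n s U V (A i))"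
    using sm sn by simp
  also have "\<dots> = four_block_mat
      (lincomb_mat s s l y (\<lambda>i. transpose_mat ?U1 * A i * ?V1))
      (lincomb_mat s (n - s) l y (\<lambda>i. transpose_mat ?U1 * A i * ?V2))
      (lincomb_mat (m - s) s l y (\<lambda>i. transpose_mat ?U2 * A i * ?V1))
      (lincomb_mat (m - s) (n - s) l y (\<lambda>_. 0\<^sub>m (m - s) (n - s)))"
    unfolding T_mat_def using A U1 U2 V1 V2 by (intro lincomb_four_block_mat) auto
  also have "\<dots> = T_mat m n s U V (lincomb_mat m n l y A)"
    unfolding T_mat_def using A U1 U2 V1 V2 by (simp add: mult_lincomb_mat)
  finally show ?thesis ..
qed

lemma T_mat_eq_zero:
  assumes U: "U \<in> carrier_mat m m" and V: "V \<in> carrier_mat n n" and W: "W \<in> carrier_mat m n"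
    and sm: "s \<le> m" and sn: "s \<le> n"
    and left: "transpose_mat (cols_sub U {0..<s}) * W = 0\<^sub>m s n"
    and right: "W * cols_sub V {0..<s} = 0\<^sub>m m s"
  shows "T_mat m n s U V W = 0\<^sub>m m n"
proof -
  have U2: "transpose_mat (cols_sub U {s..<m}) \<in> carrier_mat (m - s) m"
    and V1: "cols_sub V {0..<s} \<in> carrier_mat n s" and V2: "cols_sub V {s..<n} \<in> carrier_mat n (n - s)"
    using cols_sub_atLeastLessThan_carrier[OF U, of 0 s] cols_sub_atLeastLessThan_carrier[OF U, of s m]
      cols_sub_atLeastLessThan_carrier[OF V, of 0 s] cols_sub_atLeastLessThan_carrier[OF V, of s n] sm sn
    by auto
  have "transpose_mat (cols_sub U {s..<m}) * W * cols_sub V {0..<s}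
      = transpose_mat (cols_sub U {s..<m}) * (W * cols_sub V {0..<s})"
    using U2 W V1 by (rule assoc_mult_mat)
  then show ?thesis
    unfolding T_mat_def left right using U2 V1 V2 sm sn by simp
qed

lemma R_mat_lincomb:
  assumes U: "U \<in> carrier_mat m m" and V: "V \<in> carrier_mat n n"
    and sn: "s \<le> n" and A: "\<forall>i<l. A i \<in> carrier_mat m n"
  shows "R_mat s U V (lincomb_mat m n l y A) = lincomb_mat m s l y (\<lambda>i. R_mat s U V (A i))"
  unfolding R_mat_def
  using U A cols_sub_atLeastLessThan_carrier[OF V _ sn, of 0] by (simp add: mult_lincomb_mat)

lemma R_mat_eq_zero_if_normal_MXJ:
  assumes U: "U \<in> carrier_mat m m" and V: "V \<in> carrier_mat n n"
    and J: "J \<subseteq> {0..<n}" "{0..<s} \<subseteq> J" and W: "W \<in> normal_MXJ m n U V J"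
  shows "R_mat s U V W = 0\<^sub>m m s"
proof -
  have sn: "s \<le> n" using J by (metis atLeastLessThan_subset_iff bot_nat_0.extremum order.trans)
  have Wc: "W \<in> carrier_mat m n" and WJ: "transpose_mat U * W * cols_sub V J = 0\<^sub>m m (card J)"
    using W unfolding normal_MXJ_def by auto
  have VJ: "cols_sub V J \<in> carrier_mat n (card J)" and V1: "cols_sub V {0..<s} \<in> carrier_mat n s"
    using cols_sub_carrier[OF V J(1)] cols_sub_atLeastLessThan_carrier[OF V _ sn, of 0] by auto
  have "s \<le> card J" using J card_mono[of J "{0..<s}"] finite_subset[of J "{0..<n}"] by auto
  show ?thesis
  proof (rule eq_matI)
    fix a b assume "a < dim_row (0\<^sub>m m s :: real mat)" "b < dim_col (0\<^sub>m m s :: real mat)"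
    then have a: "a < m" and b: "b < s" by auto
    have UW: "transpose_mat U * W \<in> carrier_mat m n" using U Wc by auto
    have "R_mat s U V W $$ (a,b) = row (transpose_mat U * W) a \<bullet> col (cols_sub V {0..<s}) b"
      unfolding R_mat_def using UW V1 a b by (intro index_mult_mat(1)) auto
    also have "\<dots> = row (transpose_mat U * W) a \<bullet> col (cols_sub V J) b"
      using col_cols_sub_prefix[OF V _ _ b, of "{0..<s}"] col_cols_sub_prefix[OF V J b] sn by auto
    also have "\<dots> = (transpose_mat U * W * cols_sub V J) $$ (a,b)"
      using UW VJ a b \<open>s \<le> card J\<close> by (intro index_mult_mat(1)[symmetric]) auto
    also have "\<dots> = 0" using WJ a b \<open>s \<le> card J\<close> by simp
    finally show "R_mat s U V W $$ (a,b) = 0\<^sub>m m s $$ (a,b)" using a b by simp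
  qed (use U Wc V1 in \<open>auto simp: R_mat_def\<close>)
qed

lemma transpose_diag_mult_index:
  assumes S: "S \<in> carrier_mat m n" and diag: "\<forall>i<m. \<forall>j<n. i \<noteq> j \<longrightarrow> S $$ (i,j) = 0"
    and P: "P \<in> carrier_mat m k" and i: "i < m" "i < n" and q: "q < k"
  shows "(transpose_mat S * P) $$ (i,q) = S $$ (i,i) * P $$ (i,q)"
proof -
  have "(transpose_mat S * P) $$ (i,q) = (\<Sum>p<m. S $$ (p,i) * P $$ (p,q))"
    using S P i q by (simp add: scalar_prod_def atLeast0LessThan)
  also have "\<dots> = (\<Sum>p<m. if p = i then S $$ (i,i) * P $$ (i,q) else 0)"
    using diag i by (intro sum.cong) auto
  also have "\<dots> = S $$ (i,i) * P $$ (i,q)" using i by simp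
  finally show ?thesis .
qed

lemma is_svd_transpose:
  assumes svd: "is_svd m n s X U S V" and "s \<le> m" "s \<le> n"
  shows "is_svd n m s (transpose_mat X) V (transpose_mat S) U"
proof -
  have U: "U \<in> carrier_mat m m" and V: "V \<in> carrier_mat n n" and S: "S \<in> carrier_mat m n"
    and X: "X = U * S * transpose_mat V"
    using svd unfolding is_svd_def by auto
  have "transpose_mat X = transpose_mat (transpose_mat V) * transpose_mat (U * S)"
    unfolding X using U S V by (intro transpose_mult[of _ m n]) auto
  also have "\<dots> = V * transpose_mat S * transpose_mat U"
    using U S V by (simp add: transpose_mult[OF U S])
  finally show ?thesis using svd assms(2,3) unfolding is_svd_def by auto
qed

lemma svd_left_singular_vectors_orthogonal:
  assumes svd: "is_svd m n s X U S V" and sm: "s \<le> m" and sn: "s \<le> n"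
    and W: "W \<in> carrier_mat m k" and XW: "transpose_mat X * W = 0\<^sub>m n k"
  shows "transpose_mat (cols_sub U {0..<s}) * W = 0\<^sub>m s k"
proof -
  have U: "U \<in> carrier_mat m m" and V: "V \<in> carrier_mat n n" and VV: "transpose_mat V * V = 1\<^sub>m n"
    and S: "S \<in> carrier_mat m n" and diag: "\<forall>i<m. \<forall>j<n. i \<noteq> j \<longrightarrow> S $$ (i,j) = 0"
    and pos: "\<forall>i<s. S $$ (i,i) > 0"
    using svd unfolding is_svd_def by auto
  have U1: "cols_sub U {0..<s} \<in> carrier_mat m s"
    using cols_sub_atLeastLessThan_carrier[OF U, of 0 s] sm by simp
  define M where "M = transpose_mat S * (transpose_mat U * W)"
  have M: "M \<in> carrier_mat n k" unfolding M_def using S U W by auto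
  have "transpose_mat X = V * transpose_mat S * transpose_mat U"
    using is_svd_transpose[OF svd sm sn] unfolding is_svd_def by blast
  then have "transpose_mat X * W = V * M"
    unfolding M_def using V S U W
    by (simp add: assoc_mult_mat[of V n n "transpose_mat S * transpose_mat U" m W k]
        assoc_mult_mat[of "transpose_mat S" n m "transpose_mat U" m W k])
  then have "M = transpose_mat V * (transpose_mat X * W)"
    using V VV M by (simp add: assoc_mult_mat[symmetric, of _ n n _ n _ k])
  then have M0: "M = 0\<^sub>m n k" using XW V by simp
  show ?thesis
  proof (rule eq_matI)
    fix i q assume "i < dim_row (0\<^sub>m s k :: real mat)" "q < dim_col (0\<^sub>m s k :: real mat)"
    then have i: "i < s" and q: "q < k" by auto
    have "S $$ (i,i) * (transpose_mat U * W) $$ (i,q) = 0"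
      using transpose_diag_mult_index[OF S diag _ _ _ q, of "transpose_mat U * W" i] M0 U W i q sm sn
      unfolding M_def by auto
    then have "(transpose_mat U * W) $$ (i,q) = 0" using pos i by (metis less_irrefl mult_eq_0_iff)
    moreover have "(transpose_mat (cols_sub U {0..<s}) * W) $$ (i,q) = (transpose_mat U * W) $$ (i,q)"
      using col_cols_sub_prefix[OF U _ _ i, of "{0..<s}"] U U1 W i q sm by simp
    ultimately show "(transpose_mat (cols_sub U {0..<s}) * W) $$ (i,q) = 0\<^sub>m s k $$ (i,q)"
      using i q by simp
  qed (use U1 W in auto)
qed

lemma svd_right_singular_vectors_orthogonal:
  assumes svd: "is_svd m n s X U S V" and sm: "s \<le> m" and sn: "s \<le> n"
    and W: "W \<in> carrier_mat k n" and WX: "W * transpose_mat X = 0\<^sub>m k m"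
  shows "W * cols_sub V {0..<s} = 0\<^sub>m k s"
proof -
  have X: "X \<in> carrier_mat m n" and V: "V \<in> carrier_mat n n"
    using svd unfolding is_svd_def by auto
  have V1: "cols_sub V {0..<s} \<in> carrier_mat n s"
    using cols_sub_atLeastLessThan_carrier[OF V, of 0 s] sn by simp
  have "transpose_mat (transpose_mat X) * transpose_mat W = transpose_mat (W * transpose_mat X)"
    using X W by (simp add: transpose_mult[of W k n])
  then have "transpose_mat (transpose_mat X) * transpose_mat W = 0\<^sub>m m k" using WX by simp
  from svd_left_singular_vectors_orthogonal[OF is_svd_transpose[OF svd sm sn] sn sm _ this] W
  have "transpose_mat (cols_sub V {0..<s}) * transpose_mat W = 0\<^sub>m s k" by simp
  then have "transpose_mat (transpose_mat (cols_sub V {0..<s}) * transpose_mat W) = 0\<^sub>m k s" by simp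
  then show ?thesis using V1 W by (simp add: transpose_mult[of _ s n])
qed

lemma (in vec_space) rank_mult_le_rank_left:
  assumes A: "A \<in> carrier_mat n nc" and B: "B \<in> carrier_mat nc k"
  shows "rank (A * B) \<le> rank A"
proof -
  define S where "S = col_space A"
  have AB: "A * B \<in> carrier_mat n k" using A B by auto
  have "set (cols (A * B)) \<subseteq> S"
  proof
    fix x assume "x \<in> set (cols (A * B))"
    then obtain j where j: "j < k" "x = col (A * B) j"
      using AB by (metis cols_length cols_nth in_set_conv_nth carrier_matD(2))
    then have "x = A *\<^sub>v col B j" and "col B j \<in> carrier_vec nc" using A B by auto
    then show "x \<in> S" unfolding S_def using col_space_eq[OF A] A by auto
  qed
  moreover have S: "subspace class_ring S V"
    unfolding S_def col_space_def using A by (metis cols_dim carrier_matD(1) span_is_subspace)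
  ultimately have sub: "span (set (cols (A * B))) \<subseteq> S"
    by (simp add: span_is_subset subspace_def)
  have "subspace class_ring (span (set (cols (A * B)))) (vs S)"
    using nested_subspaces[OF S _ sub] AB by (metis cols_dim carrier_matD(1) span_is_subspace)
  moreover have "vectorspace.fin_dim class_ring (vs S)"
    unfolding S_def col_space_def using A fin_dim_span_cols by auto
  moreover have "vectorspace.fin_dim class_ring (vs (span (set (cols (A * B)))))"
    using AB fin_dim_span_cols by auto
  ultimately show ?thesis unfolding rank_def
    using vectorspace.subspace_dim[OF subspace_is_vs[OF S]] unfolding S_def col_space_def by auto
qed

lemma (in vec_space) dim_image_mult_mat_vec_le:
  assumes S: "subspace class_ring S V" and fin: "vectorspace.fin_dim class_ring (vs S)"
    and B: "B \<in> carrier_mat n n"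
  shows "vectorspace.dim class_ring (vs ((\<lambda>x. B *\<^sub>v x) ` S)) \<le> vectorspace.dim class_ring (vs S)"
proof -
  have Sc: "S \<subseteq> carrier_vec n" using S unfolding subspace_def submodule_def by auto
  have hom: "(\<lambda>x. B *\<^sub>v x) \<in> module_hom class_ring (vs S) V"
    unfolding module_hom_def using Sc B
    by (auto intro!: mult_add_distrib_mat_vec simp: mult_mat_vec subsetD)
  interpret L: linear_map class_ring "vs S" V "\<lambda>x. B *\<^sub>v x"
    unfolding linear_map_def mod_hom_def mod_hom_axioms_def
    using subspace_is_vs[OF S] vectorspace_axioms hom vectorspace.axioms(1) by blast
  have "L.imT = (\<lambda>x. B *\<^sub>v x) ` S" unfolding L.im_def by simp
  then show ?thesis using L.rank_nullity_main(1)[OF fin] by simp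
qed

lemma (in vec_space) col_space_mult_left:
  assumes A: "A \<in> carrier_mat n nc" and B: "B \<in> carrier_mat n n"
  shows "col_space (B * A) = (\<lambda>x. B *\<^sub>v x) ` col_space A"
proof -
  have BA: "B * A \<in> carrier_mat n nc" using A B by auto
  have "col_space (B * A) = {y \<in> carrier_vec n. \<exists>x\<in>carrier_vec nc. B *\<^sub>v (A *\<^sub>v x) = y}"
    using col_space_eq[OF BA] A B by (auto simp: assoc_mult_mat_vec)
  also have "\<dots> = (\<lambda>x. B *\<^sub>v x) ` {y \<in> carrier_vec n. \<exists>x\<in>carrier_vec nc. A *\<^sub>v x = y}"
    using A B by auto
  also have "\<dots> = (\<lambda>x. B *\<^sub>v x) ` col_space A"
    using col_space_eq[OF A] A by simp
  finally show ?thesis .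
qed

lemma (in vec_space) rank_mult_le_rank_right:
  assumes A: "A \<in> carrier_mat n nc" and B: "B \<in> carrier_mat n n"
  shows "rank (B * A) \<le> rank A"
proof -
  have "subspace class_ring (col_space A) V"
    unfolding col_space_def using A by (metis cols_dim carrier_matD(1) span_is_subspace)
  moreover have "vectorspace.fin_dim class_ring (vs (col_space A))"
    unfolding col_space_def using A fin_dim_span_cols by auto
  ultimately show ?thesis
    using dim_image_mult_mat_vec_le[OF _ _ B] col_space_mult_left[OF A B]
    unfolding rank_def col_space_def by metis
qed

lemma low_rank_set_mult_right:
  assumes "Z \<in> low_rank_set m n r" and "M \<in> carrier_mat n n"
  shows "Z * M \<in> low_rank_set m n r"
  using assms vec_space.rank_mult_le_rank_left[of Z m n M n]
  unfolding low_rank_set_def mrank_def by auto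

lemma low_rank_set_mult_left:
  assumes "Z \<in> low_rank_set m n r" and "M \<in> carrier_mat m m"
  shows "M * Z \<in> low_rank_set m n r"
  using assms vec_space.rank_mult_le_rank_right[of Z m n M]
  unfolding low_rank_set_def mrank_def by auto

lemma frob_mult_left:
  assumes Y: "Y \<in> carrier_mat m k" and Z: "Z \<in> carrier_mat m n" and M: "M \<in> carrier_mat n k"
  shows "frob Y (Z * M) = frob (transpose_mat Z * Y) M"
  unfolding frob_def using Y Z M
  by (simp add: scalar_prod_def atLeast0LessThan sum_distrib_left sum_distrib_right mult_ac sum.swap[of _ "{..<m}"])
    (intro sum.cong refl sum.swap)

lemma frob_mult_right:
  assumes Y: "Y \<in> carrier_mat m k" and M: "M \<in> carrier_mat m n" and Z: "Z \<in> carrier_mat n k"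
  shows "frob Y (M * Z) = frob (Y * transpose_mat Z) M"
  unfolding frob_def using Y Z M
  by (simp add: scalar_prod_def atLeast0LessThan sum_distrib_left sum_distrib_right mult_ac sum.swap[of _ "{..<k}"])

lemma frob_self_nonpos_imp_zero:
  assumes M: "M \<in> carrier_mat m n" and le: "frob M M \<le> 0"
  shows "M = 0\<^sub>m m n"
proof -
  have rows_nonneg: "0 \<le> (\<Sum>j<n. M $$ (i,j) * M $$ (i,j))" for i
    by (intro sum_nonneg) simp
  have "frob M M = (\<Sum>i<m. \<Sum>j<n. M $$ (i,j) * M $$ (i,j))"
    unfolding frob_def using M by simp
  moreover have "0 \<le> (\<Sum>i<m. \<Sum>j<n. M $$ (i,j) * M $$ (i,j))"
    by (rule sum_nonneg) (rule rows_nonneg)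
  ultimately have "(\<Sum>i<m. \<Sum>j<n. M $$ (i,j) * M $$ (i,j)) = 0"
    using le by linarith
  then have "\<forall>i<m. (\<Sum>j<n. M $$ (i,j) * M $$ (i,j)) = 0"
    by (simp add: sum_nonneg_eq_0_iff rows_nonneg)
  then have "\<forall>i<m. \<forall>j<n. M $$ (i,j) = 0"
    by (simp add: sum_nonneg_eq_0_iff)
  then show ?thesis using M by (intro eq_matI) auto
qed

lemma ray_in_bouligand_tangent:
  assumes Z: "Z \<in> carrier_mat m n" and D: "D \<in> carrier_mat m n"
    and ray: "\<And>t. t > 0 \<Longrightarrow> Z + t \<cdot>\<^sub>m D \<in> \<Omega>"
  shows "D \<in> bouligand_tangent m n \<Omega> Z"
proof -
  define t where "t = (\<lambda>k::nat. inverse (real (Suc k)))"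
  define Xs where "Xs = (\<lambda>k. Z + t k \<cdot>\<^sub>m D)"
  have t_pos: "\<forall>k. t k > 0" unfolding t_def by auto
  have t_lim: "t \<longlonglongrightarrow> 0" unfolding t_def by (rule LIMSEQ_inverse_real_of_nat)
  have "mat_tendsto m n Xs Z"
    unfolding mat_tendsto_def
  proof (intro conjI allI impI)
    fix i j assume ij: "i < m" "j < n"
    have "(\<lambda>k. Z $$ (i,j) + t k * D $$ (i,j)) \<longlonglongrightarrow> Z $$ (i,j) + 0 * D $$ (i,j)"
      by (intro tendsto_intros t_lim)
    then show "(\<lambda>k. Xs k $$ (i,j)) \<longlonglongrightarrow> Z $$ (i,j)" using Z D ij unfolding Xs_def by simp
  qed (use Z D in \<open>auto simp: Xs_def\<close>)
  moreover have "mat_tendsto m n (\<lambda>k. (1 / t k) \<cdot>\<^sub>m (Xs k - Z)) D"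
    unfolding mat_tendsto_def
  proof (intro conjI allI impI)
    fix i j assume ij: "i < m" "j < n"
    have "((1 / t k) \<cdot>\<^sub>m (Xs k - Z)) $$ (i,j) = D $$ (i,j)" for k
      using Z D ij t_pos[rule_format, of k] unfolding Xs_def by simp
    then show "(\<lambda>k. ((1 / t k) \<cdot>\<^sub>m (Xs k - Z)) $$ (i,j)) \<longlonglongrightarrow> D $$ (i,j)" by simp
  qed (use Z D in \<open>auto simp: Xs_def\<close>)
  moreover have "\<forall>k. Xs k \<in> \<Omega>" using ray t_pos unfolding Xs_def by auto
  ultimately show ?thesis
    unfolding bouligand_tangent_def using D t_pos t_lim by blast
qed

lemma mult_right_in_tangent_low_rank:
  assumes Z: "Z \<in> low_rank_set m n r" and E: "E \<in> carrier_mat n n"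
  shows "Z * E \<in> bouligand_tangent m n (low_rank_set m n r) Z"
proof (rule ray_in_bouligand_tangent)
  show Zc: "Z \<in> carrier_mat m n" using Z unfolding low_rank_set_def by auto
  then show "Z * E \<in> carrier_mat m n" using E by auto
  fix t :: real
  have "Z * (1\<^sub>m n + t \<cdot>\<^sub>m E) = Z * 1\<^sub>m n + Z * (t \<cdot>\<^sub>m E)"
    using Zc E by (intro mult_add_distrib_mat) auto
  then have "Z + t \<cdot>\<^sub>m (Z * E) = Z * (1\<^sub>m n + t \<cdot>\<^sub>m E)"
    using Zc E by (simp add: mult_smult_distrib[OF Zc E])
  then show "Z + t \<cdot>\<^sub>m (Z * E) \<in> low_rank_set m n r"
    using low_rank_set_mult_right[OF Z] E by simp
qed

lemma mult_left_in_tangent_low_rank: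
  assumes Z: "Z \<in> low_rank_set m n r" and E: "E \<in> carrier_mat m m"
  shows "E * Z \<in> bouligand_tangent m n (low_rank_set m n r) Z"
proof (rule ray_in_bouligand_tangent)
  show Zc: "Z \<in> carrier_mat m n" using Z unfolding low_rank_set_def by auto
  then show "E * Z \<in> carrier_mat m n" using E by auto
  fix t :: real
  have "(1\<^sub>m m + t \<cdot>\<^sub>m E) * Z = 1\<^sub>m m * Z + (t \<cdot>\<^sub>m E) * Z"
    using Zc E by (intro add_mult_distrib_mat) auto
  then have "Z + t \<cdot>\<^sub>m (E * Z) = (1\<^sub>m m + t \<cdot>\<^sub>m E) * Z"
    using Zc E by (simp add: mult_smult_assoc_mat[OF E Zc])
  then show "Z + t \<cdot>\<^sub>m (E * Z) \<in> low_rank_set m n r"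
    using low_rank_set_mult_left[OF Z] E by simp
qed

lemma frechet_normal_low_rank_orthogonal:
  assumes Z: "Z \<in> low_rank_set m n r" and Y: "Y \<in> frechet_normal m n (low_rank_set m n r) Z"
  shows "transpose_mat Z * Y = 0\<^sub>m n n" and "Y * transpose_mat Z = 0\<^sub>m m m"
proof -
  have Zc: "Z \<in> carrier_mat m n" using Z unfolding low_rank_set_def by auto
  have Yc: "Y \<in> carrier_mat m n" using Y unfolding frechet_normal_def by auto
  have normal: "frob Y D \<le> 0" if "D \<in> bouligand_tangent m n (low_rank_set m n r) Z" for D
    using Y that unfolding frechet_normal_def by auto
  have "frob (transpose_mat Z * Y) (transpose_mat Z * Y) = frob Y (Z * (transpose_mat Z * Y))"
    using Zc Yc by (intro frob_mult_left[symmetric]) auto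
  also have "\<dots> \<le> 0"
    using Zc Yc by (intro normal mult_right_in_tangent_low_rank[OF Z]) auto
  finally show "transpose_mat Z * Y = 0\<^sub>m n n"
    using Zc Yc by (intro frob_self_nonpos_imp_zero) auto
  have "frob (Y * transpose_mat Z) (Y * transpose_mat Z) = frob Y ((Y * transpose_mat Z) * Z)"
    using Zc Yc by (intro frob_mult_right[symmetric]) auto
  also have "\<dots> \<le> 0"
    using Zc Yc by (intro normal mult_left_in_tangent_low_rank[OF Z]) auto
  finally show "Y * transpose_mat Z = 0\<^sub>m m m"
    using Zc Yc by (intro frob_self_nonpos_imp_zero) auto
qed

lemma mat_tendsto_const: "C \<in> carrier_mat m n \<Longrightarrow> mat_tendsto m n (\<lambda>k. C) C"
  unfolding mat_tendsto_def by simp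

lemma mat_tendsto_const_unique: "mat_tendsto m n (\<lambda>k. C) D \<Longrightarrow> D = C"
  unfolding mat_tendsto_def by (intro eq_matI) (auto simp: LIMSEQ_const_iff)

lemma mat_tendsto_transpose:
  assumes "mat_tendsto m n Xs X"
  shows "mat_tendsto n m (\<lambda>k. transpose_mat (Xs k)) (transpose_mat X)"
proof -
  have "transpose_mat (Xs k) $$ (i,j) = Xs k $$ (j,i)" if "i < n" "j < m" for i j k
    using assms that unfolding mat_tendsto_def by (metis carrier_matD index_transpose_mat(1))
  then show ?thesis using assms unfolding mat_tendsto_def by auto
qed

lemma mat_tendsto_mult:
  assumes A: "mat_tendsto p q As A" and B: "mat_tendsto q r Bs B"
  shows "mat_tendsto p r (\<lambda>k. As k * Bs k) (A * B)"
  unfolding mat_tendsto_def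
proof (intro conjI allI impI)
  have carriers: "As k \<in> carrier_mat p q" "Bs k \<in> carrier_mat q r" "A \<in> carrier_mat p q" "B \<in> carrier_mat q r"
    for k using A B unfolding mat_tendsto_def by auto
  then show "As k * Bs k \<in> carrier_mat p r" "A * B \<in> carrier_mat p r" for k
    by (meson mult_carrier_mat)+
  fix i j assume ij: "i < p" "j < r"
  have entry: "(M * N) $$ (i,j) = (\<Sum>t<q. M $$ (i,t) * N $$ (t,j))"
    if "M \<in> carrier_mat p q" "N \<in> carrier_mat q r" for M N
    using that ij by (simp add: scalar_prod_def atLeast0LessThan)
  have "(\<lambda>k. \<Sum>t<q. As k $$ (i,t) * Bs k $$ (t,j)) \<longlonglongrightarrow> (\<Sum>t<q. A $$ (i,t) * B $$ (t,j))"
    using A B ij unfolding mat_tendsto_def by (intro tendsto_sum tendsto_mult) auto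
  then show "(\<lambda>k. (As k * Bs k) $$ (i,j)) \<longlonglongrightarrow> (A * B) $$ (i,j)"
    unfolding entry[OF carriers(1,2)] entry[OF carriers(3,4)] .
qed

lemma zero_mem_mordukhovich_normal:
  assumes "X \<in> \<Omega>" and "X \<in> carrier_mat m n"
  shows "0\<^sub>m m n \<in> mordukhovich_normal m n \<Omega> X"
proof -
  have "0\<^sub>m m n \<in> frechet_normal m n \<Omega> X"
    unfolding frechet_normal_def frob_def by auto
  then have "\<exists>Xs Ws. (\<forall>k. Xs k \<in> \<Omega>) \<and> mat_tendsto m n Xs X \<and>
      (\<forall>k. Ws k \<in> frechet_normal m n \<Omega> (Xs k)) \<and> mat_tendsto m n Ws (0\<^sub>m m n)"
    using assms mat_tendsto_const[of X m n] mat_tendsto_const[of "0\<^sub>m m n" m n]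
    by (intro exI[where x="\<lambda>k. X"] exI[where x="\<lambda>k. 0\<^sub>m m n"]) simp
  then show ?thesis unfolding mordukhovich_normal_def by simp
qed

lemma mordukhovich_normal_low_rank_orthogonal:
  assumes "W \<in> mordukhovich_normal m n (low_rank_set m n r) X"
  shows "transpose_mat X * W = 0\<^sub>m n n" and "W * transpose_mat X = 0\<^sub>m m m"
proof -
  obtain Xs Ws where Xs: "\<forall>k. Xs k \<in> low_rank_set m n r" and X: "mat_tendsto m n Xs X"
    and Ws: "\<forall>k. Ws k \<in> frechet_normal m n (low_rank_set m n r) (Xs k)" and W: "mat_tendsto m n Ws W"
    using assms unfolding mordukhovich_normal_def by blast
  have "(\<lambda>k. transpose_mat (Xs k) * Ws k) = (\<lambda>k. 0\<^sub>m n n)"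
    using frechet_normal_low_rank_orthogonal(1) Xs Ws by blast
  with mat_tendsto_mult[OF mat_tendsto_transpose[OF X] W]
  show "transpose_mat X * W = 0\<^sub>m n n" by (simp add: mat_tendsto_const_unique)
  have "(\<lambda>k. Ws k * transpose_mat (Xs k)) = (\<lambda>k. 0\<^sub>m m m)"
    using frechet_normal_low_rank_orthogonal(2) Xs Ws by blast
  with mat_tendsto_mult[OF W mat_tendsto_transpose[OF X]]
  show "W * transpose_mat X = 0\<^sub>m m m" by (simp add: mat_tendsto_const_unique)
qed

lemma mordukhovich_normal_inter_normal_L:
  assumes nm: "n \<le> m" and A: "\<forall>i<l. A i \<in> carrier_mat m n"
    and X: "X \<in> low_rank_set m n r" and svd: "is_svd m n s X U S V" and sn: "s \<le> n"
    and indep: "mats_lin_indep m n l (\<lambda>i. T_mat m n s U V (A i))"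
  shows "mordukhovich_normal m n (low_rank_set m n r) X \<inter> normal_L m n l A = {0\<^sub>m m n}"
proof (intro equalityI subsetI)
  have U: "U \<in> carrier_mat m m" and V: "V \<in> carrier_mat n n"
    using svd unfolding is_svd_def by auto
  have sm: "s \<le> m" using sn nm by simp
  fix W assume "W \<in> mordukhovich_normal m n (low_rank_set m n r) X \<inter> normal_L m n l A"
  then have WM: "W \<in> mordukhovich_normal m n (low_rank_set m n r) X" and WL: "W \<in> normal_L m n l A"
    by auto
  have Wc: "W \<in> carrier_mat m n" using WL unfolding normal_L_def by auto
  have "T_mat m n s U V W = 0\<^sub>m m n"
    using svd_left_singular_vectors_orthogonal[OF svd sm sn Wc mordukhovich_normal_low_rank_orthogonal(1)[OF WM]]
      svd_right_singular_vectors_orthogonal[OF svd sm sn Wc mordukhovich_normal_low_rank_orthogonal(2)[OF WM]]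
    by (intro T_mat_eq_zero[OF U V Wc sm sn])
  then show "W \<in> {0\<^sub>m m n}"
    using eq_zero_if_lin_indep_image[OF WL T_mat_lincomb[OF U V sm sn A] indep] by simp
next
  fix W :: "real mat" assume "W \<in> {0\<^sub>m m n}"
  then show "W \<in> mordukhovich_normal m n (low_rank_set m n r) X \<inter> normal_L m n l A"
    using zero_mem_mordukhovich_normal[OF X] X normal_L_iff_lincomb_mat[of W m n l A]
    unfolding low_rank_set_def by (auto intro: exI[of _ "\<lambda>_. 0"])
qed

lemma normal_MXJ_inter_normal_L:
  assumes A: "\<forall>i<l. A i \<in> carrier_mat m n"
    and U: "U \<in> carrier_mat m m" and V: "V \<in> carrier_mat n n"
    and J: "J \<subseteq> {0..<n}" "{0..<s} \<subseteq> J"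
    and indep: "mats_lin_indep m s l (\<lambda>i. R_mat s U V (A i))"
  shows "normal_MXJ m n U V J \<inter> normal_L m n l A = {0\<^sub>m m n}"
proof (intro equalityI subsetI)
  have sn: "s \<le> n" using J by (metis atLeastLessThan_subset_iff bot_nat_0.extremum order.trans)
  fix W assume "W \<in> normal_MXJ m n U V J \<inter> normal_L m n l A"
  then show "W \<in> {0\<^sub>m m n}"
    using eq_zero_if_lin_indep_image[OF _ R_mat_lincomb[OF U V sn A] indep]
      R_mat_eq_zero_if_normal_MXJ[OF U V J] by auto
next
  have "transpose_mat U * 0\<^sub>m m n * cols_sub V J = 0\<^sub>m m (card J)"
    using U cols_sub_carrier[OF V J(1)] by simp
  then show "W \<in> normal_MXJ m n U V J \<inter> normal_L m n l A" if "W \<in> {0\<^sub>m m n}" for W :: "real mat"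
    using that normal_L_iff_lincomb_mat[of W m n l A] unfolding normal_MXJ_def
    by (auto intro: exI[of _ "\<lambda>_. 0"])
qed

theorem proposition3p1:
  fixes m n l r s :: nat and A :: "nat \<Rightarrow> real mat" and b :: "nat \<Rightarrow> real"
    and X U S V :: "real mat"
  assumes "m \<ge> n" and "r < n"
    and "\<forall>i<l. A i \<in> carrier_mat m n"
    and "X \<in> affine_set m n l A b \<inter> low_rank_set m n r"
    and "mrank X = s"
    and "is_svd m n s X U S V"
  shows "(mats_lin_indep m n l (\<lambda>i. T_mat m n s U V (A i)) \<longrightarrow>
            mordukhovich_normal m n (low_rank_set m n r) X \<inter> normal_L m n l A = {0\<^sub>m m n})
       \<and> (mats_lin_indep m s l (\<lambda>i. R_mat s U V (A i)) \<longrightarrow>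
            (\<forall>J. J \<subseteq> {0..<n} \<and> {0..<s} \<subseteq> J \<longrightarrow>
               normal_MXJ m n U V J \<inter> normal_L m n l A = {0\<^sub>m m n}))"
proof -
  have X: "X \<in> low_rank_set m n r" using assms(4) by simp
  then have "s \<le> n" using assms(2,5) unfolding low_rank_set_def by simp
  moreover have "U \<in> carrier_mat m m" "V \<in> carrier_mat n n"
    using assms(6) unfolding is_svd_def by auto
  ultimately show ?thesis
    using mordukhovich_normal_inter_normal_L[OF assms(1,3) X assms(6)]
      normal_MXJ_inter_normal_L[OF assms(3)] by blast
qed

end
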